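(* If $\mathcal{F}=\{f_i\}_{i=1}^N$ is an exact phase-retrievable frame for $\mathbb{R}^n$, then $2n-1\le N\le n(n+1)/2$.
   Context: A frame for $\mathbb{R}^n$ is a finite spanning sequence. It is phase-retrievable if $|\langle x,f_i\rangle|=|\langle y,f_i\rangle|$ for all $i$ implies $x=\pm y$. Let $\mathcal{S}_2$ be the set of real symmetric $n\times n$ matrices of rank at most $2$; for $\Lambda\subseteq\{1,\dots,N\}$ put $\Theta_{L(\mathcal{F}_\Lambda)}(A)=(f_i^TAf_i)_{i\in\Lambda}$. $\mathcal{F}$ has the exact PR-redundancy property if $\ker(\Theta_{L(\mathcal{F}_\Lambda)})\cap\mathcal{S}_2\neq\ker(\Theta_{L(\mathcal{F})})\cap\mathcal{S}_2$ for every proper subset $\Lambda$. An exact phase-retrievable frame is a phase-retrievable frame with the exact PR-redundancy property. *)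

theory Defs
  imports "HOL-Analysis.Analysis"
begin

text \<open>A frame for R^n is a finite spanning sequence, represented as a list of vectors
  in real^'n (dimension n = CARD('n)); the frame vector f_i is fs ! i, i < length fs.\<close>

definition is_frame :: "(real^'n) list \<Rightarrow> bool" where
  "is_frame fs \<longleftrightarrow> span (set fs) = UNIV"

definition phase_retrievable :: "(real^'n) list \<Rightarrow> bool" where
  "phase_retrievable fs \<longleftrightarrow> is_frame fs \<and>
     (\<forall>x y. (\<forall>i<length fs. \<bar>x \<bullet> fs ! i\<bar> = \<bar>y \<bullet> fs ! i\<bar>) \<longrightarrow> x = y \<or> x = - y)"

definition S2 :: "(real^'n^'n) set" where
  "S2 = {A. transpose A = A \<and> rank A \<le> 2}"

definition ker_Theta :: "(real^'n) list \<Rightarrow> nat set \<Rightarrow> (real^'n^'n) set" where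
  "ker_Theta fs \<Lambda> = {A. transpose A = A \<and> (\<forall>i\<in>\<Lambda>. fs ! i \<bullet> (A *v fs ! i) = 0)}"

definition exact_PR_redundancy :: "(real^'n) list \<Rightarrow> bool" where
  "exact_PR_redundancy fs \<longleftrightarrow>
     (\<forall>\<Lambda>. \<Lambda> \<subset> {..<length fs} \<longrightarrow>
        ker_Theta fs \<Lambda> \<inter> S2 \<noteq> ker_Theta fs {..<length fs} \<inter> S2)"

definition exact_phase_retrievable :: "(real^'n) list \<Rightarrow> bool" where
  "exact_phase_retrievable fs \<longleftrightarrow> phase_retrievable fs \<and> exact_PR_redundancy fs"

end

theory Submission imports Defs begin

text \<open>Lower bound: phase retrievability forces the complement property (for every split of
  the frame into two parts one part spans), since otherwise vectors u, v orthogonal to the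
  respective parts give x = u + v and y = u - v with equal moduli of frame coefficients.
  With at most 2n - 2 vectors both parts of a split into at most n - 1 vectors each fail to
  span. Upper bound: f_i^T A f_i is the inner product of A with the symmetric matrix
  f_i f_i^T, and the symmetric matrices have dimension n(n+1)/2; with more frame vectors
  some f_j f_j^T lies in the span of the others, so dropping index j does not change the
  kernel, contradicting exact PR-redundancy.\<close>

lemma span_ne_UNIV_if_card_less:
  fixes X :: "(real^'n) set"
  assumes "finite X" "card X < CARD('n)"
  shows "span X \<noteq> UNIV"
proof -
  have "dim X \<le> card X" by (rule dim_le_card) (use assms in \<open>auto intro: span_base\<close>)
  with assms have "dim X \<noteq> DIM(real^'n)" by simp
  then show ?thesis by (metis dim_eq_full)
qed

lemma phase_retrievable_complement_property:
  fixes fs :: "(real^'n) list"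
  assumes "phase_retrievable fs"
  shows "span ((!) fs ` S) = UNIV \<or> span ((!) fs ` ({..<length fs} - S)) = UNIV"
proof (rule ccontr)
  assume "\<not> ?thesis"
  then obtain u v where
    u: "u \<noteq> 0" "\<forall>x\<in>span ((!) fs ` S). u \<bullet> x = 0" and
    v: "v \<noteq> 0" "\<forall>x\<in>span ((!) fs ` ({..<length fs} - S)). v \<bullet> x = 0"
    using span_not_UNIV_orthogonal by meson
  have "\<bar>(u + v) \<bullet> fs ! i\<bar> = \<bar>(u - v) \<bullet> fs ! i\<bar>" if "i < length fs" for i
  proof (cases "i \<in> S")
    case True
    then have "u \<bullet> fs ! i = 0" using u(2) by (simp add: span_base)
    then show ?thesis by (simp add: inner_add_left inner_diff_left)
  next
    case False
    then have "v \<bullet> fs ! i = 0" using v(2) that by (simp add: span_base)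
    then show ?thesis by (simp add: inner_add_left inner_diff_left)
  qed
  then have "u + v = u - v \<or> u + v = - (u - v)"
    using assms unfolding phase_retrievable_def by blast
  then have "2 *\<^sub>R v = 0 \<or> 2 *\<^sub>R u = 0"
    by (auto simp: scaleR_2 algebra_simps)
  with u(1) v(1) show False by simp
qed

lemma phase_retrievable_length_ge:
  fixes fs :: "(real^'n) list"
  assumes "phase_retrievable fs"
  shows "2 * CARD('n) - 1 \<le> length fs"
proof (rule ccontr)
  assume short: "\<not> ?thesis"
  define S where "S = {..<CARD('n) - 1}"
  have "0 < CARD('n)" by simp
  moreover have "card ((!) fs ` S) \<le> CARD('n) - 1"
    using card_image_le[of S "(!) fs"] by (simp add: S_def)
  moreover have "card ((!) fs ` ({..<length fs} - S)) \<le> CARD('n) - 1"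
    using card_image_le[of "{..<length fs} - S" "(!) fs"] short by (simp add: S_def)
  ultimately have "card ((!) fs ` S) < CARD('n)" "card ((!) fs ` ({..<length fs} - S)) < CARD('n)"
    by linarith+
  then show False
    using phase_retrievable_complement_property[OF assms, of S] span_ne_UNIV_if_card_less
    by (metis S_def finite_imageI finite_lessThan finite_Diff)
qed

definition outer_product :: "real^'n \<Rightarrow> real^'n^'n" where
  "outer_product x = (\<chi> a b. x$a * x$b)"

lemma quadratic_form_eq_inner_outer_product: "x \<bullet> (A *v x) = A \<bullet> outer_product x"
  unfolding outer_product_def inner_vec_def matrix_vector_mult_def
  by (auto simp: sum_distrib_left intro!: sum.cong)

lemma transpose_outer_product [simp]: "transpose (outer_product x) = outer_product x"
  by (simp add: outer_product_def transpose_def vec_eq_iff mult.commute)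

definition sym_unit :: "'n set \<Rightarrow> real^'n^'n" where
  "sym_unit s = (\<chi> a b. if {a, b} = s then 1 else 0)"

lemma symmetric_in_span_sym_units:
  fixes M :: "real^'n^'n"
  assumes "transpose M = M"
  shows "M \<in> span (range (\<lambda>(k, l). sym_unit {k, l}))"
proof -
  \<comment> \<open>an off-diagonal entry is hit by both (k, l) and (l, k)\<close>
  define w where "w k l = (if k = l then M$k$l else M$k$l / 2)" for k l
  have "M$a$b = (\<Sum>(k, l)\<in>UNIV. w k l * (if {a, b} = {k, l} then 1 else 0))" for a b
  proof -
    have "(\<Sum>(k, l)\<in>UNIV. w k l * (if {a, b} = {k, l} then 1 else 0))
        = (\<Sum>(k, l)\<in>{(a, b), (b, a)}. w k l)"
      by (rule sum.mono_neutral_cong_right) (auto simp: doubleton_eq_iff split: if_splits)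
    moreover have "M$b$a = M$a$b"
      using assms by (metis transpose_def vec_lambda_beta)
    ultimately show ?thesis
      by (cases "a = b") (simp_all add: w_def)
  qed
  then have "M = (\<Sum>(k, l)\<in>UNIV. w k l *\<^sub>R sym_unit {k, l})"
    by (simp add: vec_eq_iff sym_unit_def case_prod_unfold)
  also have "\<dots> \<in> span (range (\<lambda>(k, l). sym_unit {k, l}))"
    unfolding case_prod_unfold by (intro span_sum span_scale span_base) auto
  finally show ?thesis .
qed

lemma card_doubletons:
  "card (range (\<lambda>(k :: 'n :: finite, l). {k, l})) = CARD('n) * (CARD('n) + 1) div 2"
proof -
  have "range (\<lambda>(k :: 'n, l). {k, l}) = {s. s \<subseteq> UNIV \<and> card s = 1} \<union> {s. s \<subseteq> UNIV \<and> card s = 2}"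
    by (auto simp: card_1_singleton_iff card_2_iff)
  also have "card \<dots> = card {s. s \<subseteq> (UNIV :: 'n set) \<and> card s = 1} + card {s. s \<subseteq> (UNIV :: 'n set) \<and> card s = 2}"
    by (rule card_Un_disjoint) auto
  also have "\<dots> = (CARD('n) choose 1) + (CARD('n) choose 2)"
    by (simp only: n_subsets finite)
  also have "\<dots> = CARD('n) * (CARD('n) + 1) div 2"
    by (cases "CARD('n)") (simp_all add: choose_two algebra_simps)
  finally show ?thesis .
qed

lemma dim_symmetric_matrices:
  "dim {M :: real^'n^'n. transpose M = M} \<le> CARD('n) * (CARD('n) + 1) div 2"
proof -
  have "dim {M :: real^'n^'n. transpose M = M} \<le> card (range (\<lambda>(k :: 'n, l). sym_unit {k, l}))"
    by (rule dim_le_card) (auto intro: symmetric_in_span_sym_units)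
  also have "range (\<lambda>(k :: 'n, l). sym_unit {k, l}) = sym_unit ` range (\<lambda>(k, l). {k, l})"
    by auto
  also have "card \<dots> \<le> CARD('n) * (CARD('n) + 1) div 2"
    using card_image_le card_doubletons by (metis finite)
  finally show ?thesis .
qed

lemma exists_in_span_of_others:
  fixes g :: "'a \<Rightarrow> 'b :: euclidean_space"
  assumes "finite I" "g ` I \<subseteq> V" "dim V < card I"
  shows "\<exists>j\<in>I. g j \<in> span (g ` (I - {j}))"
proof (cases "inj_on g I")
  case True
  have "\<not> independent (g ` I)"
    using independent_card_le_dim[OF assms(2)] assms(3) card_image[OF True] by linarith
  then obtain j where "j \<in> I" "g j \<in> span (g ` I - {g j})"
    unfolding dependent_def by blast
  moreover have "g ` I - {g j} = g ` (I - {j})"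
    using inj_on_image_set_diff[OF True, of I "{j}"] \<open>j \<in> I\<close> by auto
  ultimately show ?thesis by auto
next
  case False
  then obtain i j where "i \<in> I" "j \<in> I" "i \<noteq> j" "g i = g j"
    unfolding inj_on_def by blast
  then have "g j \<in> g ` (I - {j})" by (metis DiffI empty_iff image_eqI insert_iff)
  with \<open>j \<in> I\<close> show ?thesis by (auto intro: span_base)
qed

lemma ker_Theta_insert_redundant:
  assumes "outer_product (fs ! j) \<in> span ((\<lambda>i. outer_product (fs ! i)) ` \<Lambda>)"
  shows "ker_Theta fs (insert j \<Lambda>) = ker_Theta fs \<Lambda>"
proof
  show "ker_Theta fs \<Lambda> \<subseteq> ker_Theta fs (insert j \<Lambda>)"
  proof
    fix A assume A: "A \<in> ker_Theta fs \<Lambda>"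
    then have "(\<lambda>i. outer_product (fs ! i)) ` \<Lambda> \<subseteq> {B. A \<bullet> B = 0}"
      unfolding ker_Theta_def by (auto simp: quadratic_form_eq_inner_outer_product)
    then have "span ((\<lambda>i. outer_product (fs ! i)) ` \<Lambda>) \<subseteq> {B. A \<bullet> B = 0}"
      by (rule span_minimal[OF _ subspace_hyperplane])
    with assms have "fs ! j \<bullet> (A *v fs ! j) = 0"
      by (auto simp: quadratic_form_eq_inner_outer_product)
    with A show "A \<in> ker_Theta fs (insert j \<Lambda>)"
      unfolding ker_Theta_def by auto
  qed
qed (auto simp: ker_Theta_def)

lemma exact_PR_redundancy_length_le:
  fixes fs :: "(real^'n) list"
  assumes "exact_PR_redundancy fs"
  shows "length fs \<le> CARD('n) * (CARD('n) + 1) div 2"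
proof (rule ccontr)
  assume "\<not> ?thesis"
  then have "dim {M :: real^'n^'n. transpose M = M} < card {..<length fs}"
    using dim_symmetric_matrices[where 'n='n] by simp
  moreover have "(\<lambda>i. outer_product (fs ! i)) ` {..<length fs} \<subseteq> {M. transpose M = M}"
    by auto
  ultimately obtain j where j: "j < length fs"
    and "outer_product (fs ! j) \<in> span ((\<lambda>i. outer_product (fs ! i)) ` ({..<length fs} - {j}))"
    using exists_in_span_of_others[of "{..<length fs}"] by blast
  then have "ker_Theta fs ({..<length fs} - {j}) = ker_Theta fs {..<length fs}"
    using ker_Theta_insert_redundant by (metis insert_Diff lessThan_iff)
  moreover have "{..<length fs} - {j} \<subset> {..<length fs}"
    using j by auto
  ultimately show False
    using assms unfolding exact_PR_redundancy_def by metis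
qed

theorem corollary1p6:
  fixes fs :: "(real^'n) list"
  assumes "exact_phase_retrievable fs"
  shows "2 * CARD('n) - 1 \<le> length fs \<and> length fs \<le> CARD('n) * (CARD('n) + 1) div 2"
  using assms phase_retrievable_length_ge exact_PR_redundancy_length_le
  unfolding exact_phase_retrievable_def by blast

end
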